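(* For every $M \geq 1$ there exist $H \geq 1$ and $\epsilon > 0$ such that the following holds. Let $f \colon (\mathbb{W},d_{\mathrm{par}}) \to (\mathbb{H},d)$ be an $M$-bilipschitz map, let $\theta \in [-\pi/2,\pi/2)$, and let $Q \in \mathcal{D}$ be such that $\beta_{f}(\mathbb{V};HQ) < \epsilon/H$ for some vertical subgroup $\mathbb{V}$ with $\angle(\mathbb{V},\mathbb{W}_{\theta}) = 0$. Then $\mathcal{H}^{3}(\Pi_{\theta}[f(HQ)]) \geq \ell(Q)^{3}$.
   Context: $\mathbb{H}$ is $\mathbb{R}^{3}$ with group law $(x_{1},y_{1},t_{1}) \cdot (x_{2},y_{2},t_{2}) = (x_{1}+x_{2},y_{1}+y_{2},t_{1}+t_{2}+\tfrac{1}{2}(x_{1}y_{2}-x_{2}y_{1}))$, metric $d(p,q) = \|q^{-1}\cdot p\|$ with $\|(x,y,t)\| = \max\{\sqrt{x^{2}+y^{2}},\sqrt{|t|}\}$, $N(E,\delta) = \{p : \operatorname{dist}(p,E) \leq \delta\}$, and $\mathcal{H}^{3}$ the $3$-dimensional Hausdorff measure w.r.t. $d$. Horizontal lines in $\mathbb{H}$: sets $p \cdot \{(sa,sb,0) : s \in \mathbb{R}\}$, $(a,b) \neq 0$. Vertical planes: sets $\{(x,y,t) : (x,y) \in \lambda\}$, $\lambda \subset \mathbb{R}^{2}$ an affine line; vertical subgroups are those containing $0$. $R_{\theta}(z,t) = (e^{i\theta}z,t)$ with $z = x+iy$; $\mathbb{W}_{\theta} = R_{\theta}(\{(0,y,t)\})$;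 $\Pi(x,y,t) = (0,y,t+\tfrac{1}{2}xy)$ and $\Pi_{\theta} = R_{\theta} \circ \Pi \circ R_{\theta}^{-1}$. A horizontal line not contained in a left translate of the $xt$-plane can be written uniquely as $\{(ay+b,y,\tfrac{1}{2}by+c) : y \in \mathbb{R}\}$; its slope is $|a|$ (and $\infty$ for lines in translates of the $xt$-plane); the slope $\angle(\mathbb{V})$ of a vertical plane is the slope of any horizontal line it contains, and $\angle(\mathbb{V},\mathbb{W}_{\theta}) := \angle(R_{\theta}^{-1}\mathbb{V})$. $\mathbb{W}$ is $\mathbb{R}^{2}$ with $d_{\mathrm{par}}((y,t),(\xi,\tau)) = \max\{|y-\xi|,|t-\tau|^{1/2}\}$; horizontal lines in $\mathbb{W}$ are $\mathbb{R} \times \{t\}$. $\mathcal{D}$: dyadic parabolic rectangles $Q = [k2^{-n},(k+1)2^{-n}) \times [l4^{-n},(l+1)4^{-n})$, $\ell(Q) = 2^{-n}$, centre $c_{Q}$, $HQ$ the closed $d_{\mathrm{par}}$-ball of radius $H\ell(Q)$ around $c_{Q}$. For a vertical plane $\mathbb{V}$ and a closed parabolic ball $B(w,r)$, $\beta_{f}(\mathbb{V};B(w,r))$ is the infimum of $\epsilon > 0$ such that for every horizontal line $\ell \subset \mathbb{W}$ there is a horizontal line $L \subset \mathbb{V}$ with $f(\ell \cap B(w,r)) \subset N(L,\epsilon r)$. *)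

theory Defs
  imports "HOL-Analysis.Analysis"
begin

type_synonym heis = "real \<times> real \<times> real"

definition hmult :: "heis \<Rightarrow> heis \<Rightarrow> heis" where
  "hmult p q = (case p of (x1, y1, t1) \<Rightarrow> case q of (x2, y2, t2) \<Rightarrow>
      (x1 + x2, y1 + y2, t1 + t2 + (x1 * y2 - x2 * y1) / 2))"

definition hinv :: "heis \<Rightarrow> heis" where
  "hinv p = (case p of (x, y, t) \<Rightarrow> (-x, -y, -t))"

definition hnorm :: "heis \<Rightarrow> real" where
  "hnorm p = (case p of (x, y, t) \<Rightarrow> max (sqrt (x\<^sup>2 + y\<^sup>2)) (sqrt \<bar>t\<bar>))"

definition hdist :: "heis \<Rightarrow> heis \<Rightarrow> real" where
  "hdist p q = hnorm (hmult (hinv q) p)"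

definition hsetdist :: "heis \<Rightarrow> heis set \<Rightarrow> real" where
  "hsetdist p E = Inf {hdist p q | q. q \<in> E}"

definition hnbhd :: "heis set \<Rightarrow> real \<Rightarrow> heis set" where
  "hnbhd E \<delta> = {p. hsetdist p E \<le> \<delta>}"

definition mdiam :: "('a \<Rightarrow> 'a \<Rightarrow> real) \<Rightarrow> 'a set \<Rightarrow> real" where
  "mdiam d E = (if E = {} then 0 else Sup {d x y | x y. x \<in> E \<and> y \<in> E})"

definition hausdorff_content :: "('a \<Rightarrow> 'a \<Rightarrow> real) \<Rightarrow> real \<Rightarrow> real \<Rightarrow> 'a set \<Rightarrow> ennreal" where
  "hausdorff_content d s \<delta> A =
     (INF C \<in> {C :: nat \<Rightarrow> 'a set. A \<subseteq> (\<Union>i. C i) \<and>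
                 (\<forall>i. bdd_above {d x y | x y. x \<in> C i \<and> y \<in> C i} \<and> mdiam d (C i) \<le> \<delta>)}.
        (\<Sum>i. ennreal (mdiam d (C i) powr s)))"

definition hausdorff_measure :: "('a \<Rightarrow> 'a \<Rightarrow> real) \<Rightarrow> real \<Rightarrow> 'a set \<Rightarrow> ennreal" where
  "hausdorff_measure d s A = (SUP \<delta> \<in> {0<..}. hausdorff_content d s \<delta> A)"

definition horizontal_line :: "heis set \<Rightarrow> bool" where
  "horizontal_line L \<longleftrightarrow> (\<exists>p a b. (a, b) \<noteq> (0, 0) \<and> L = {hmult p (s * a, s * b, 0) | s. True})"

definition vertical_plane :: "heis set \<Rightarrow> bool" where
  "vertical_plane V \<longleftrightarrow> (\<exists>x0 y0 a b. (a, b) \<noteq> (0, 0) \<and>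
      V = {(x, y, t). \<exists>s. x = x0 + s * a \<and> y = y0 + s * b})"

definition vertical_subgroup :: "heis set \<Rightarrow> bool" where
  "vertical_subgroup V \<longleftrightarrow> vertical_plane V \<and> (0, 0, 0) \<in> V"

definition line_slope :: "heis set \<Rightarrow> ereal" where
  "line_slope L = (if \<exists>a b c. L = {(a * y + b, y, b * y / 2 + c) | y. True}
      then ereal \<bar>THE a. \<exists>b c. L = {(a * y + b, y, b * y / 2 + c) | y. True}\<bar>
      else \<infinity>)"

definition plane_slope :: "heis set \<Rightarrow> ereal" where
  "plane_slope V = line_slope (SOME L. horizontal_line L \<and> L \<subseteq> V)"

definition rot :: "real \<Rightarrow> heis \<Rightarrow> heis" where
  "rot \<theta> p = (case p of (x, y, t) \<Rightarrow> (x * cos \<theta> - y * sin \<theta>, x * sin \<theta> + y * cos \<theta>, t))"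

definition plane_angle :: "heis set \<Rightarrow> real \<Rightarrow> ereal" where
  "plane_angle V \<theta> = plane_slope (rot (-\<theta>) ` V)"

definition Wtheta :: "real \<Rightarrow> heis set" where
  "Wtheta \<theta> = rot \<theta> ` {(0, y, t) | y t. True}"

definition proj :: "heis \<Rightarrow> heis" where
  "proj p = (case p of (x, y, t) \<Rightarrow> (0, y, t + x * y / 2))"

definition proj_theta :: "real \<Rightarrow> heis \<Rightarrow> heis" where
  "proj_theta \<theta> = rot \<theta> \<circ> proj \<circ> rot (-\<theta>)"

definition dpar :: "real \<times> real \<Rightarrow> real \<times> real \<Rightarrow> real" where
  "dpar w v = (case w of (y, t) \<Rightarrow> case v of (\<xi>, \<tau>) \<Rightarrow> max \<bar>y - \<xi>\<bar> (sqrt \<bar>t - \<tau>\<bar>))"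

definition pball :: "real \<times> real \<Rightarrow> real \<Rightarrow> (real \<times> real) set" where
  "pball w r = {v. dpar w v \<le> r}"

definition bilipschitz :: "real \<Rightarrow> (real \<times> real \<Rightarrow> heis) \<Rightarrow> bool" where
  "bilipschitz M f \<longleftrightarrow> (\<forall>w v. dpar w v / M \<le> hdist (f w) (f v) \<and> hdist (f w) (f v) \<le> M * dpar w v)"

definition dyadic_rect :: "int \<Rightarrow> int \<Rightarrow> int \<Rightarrow> (real \<times> real) set" where
  "dyadic_rect n k l = {k * 2 powr (-n) ..< (k + 1) * 2 powr (-n)} \<times> {l * 4 powr (-n) ..< (l + 1) * 4 powr (-n)}"

definition side :: "int \<Rightarrow> real" where
  "side n = 2 powr (- real_of_int n)"

definition centre :: "int \<Rightarrow> int \<Rightarrow> int \<Rightarrow> real \<times> real" where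
  "centre n k l = ((k + 1/2) * 2 powr (-n), (l + 1/2) * 4 powr (-n))"

text \<open>HQ: closed d_par ball of radius H l(Q) around c_Q.\<close>
definition enlarged :: "real \<Rightarrow> int \<Rightarrow> int \<Rightarrow> int \<Rightarrow> (real \<times> real) set" where
  "enlarged H n k l = pball (centre n k l) (H * side n)"

definition horizontal_line_W :: "(real \<times> real) set \<Rightarrow> bool" where
  "horizontal_line_W hl \<longleftrightarrow> (\<exists>t. hl = UNIV \<times> {t})"

definition beta :: "(real \<times> real \<Rightarrow> heis) \<Rightarrow> heis set \<Rightarrow> real \<times> real \<Rightarrow> real \<Rightarrow> real" where
  "beta f V w r = Inf {\<epsilon>. \<epsilon> > 0 \<and> (\<forall>hl. horizontal_line_W hl \<longrightarrow>
        (\<exists>L. horizontal_line L \<and> L \<subseteq> V \<and> f ` (hl \<inter> pball w r) \<subseteq> hnbhd L (\<epsilon> * r)))}"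

end

(*
  Take H = 4 M^3 and epsilon = 1/8, and rotate by -theta so that V becomes the plane {x = 0}.
  A small beta number means that f maps each horizontal line of HQ into a small neighbourhood
  of a horizontal line of V, and after the rotation such a line has constant height t.  Hence
  the map F = Pi o R_{-theta} o f, read in the coordinates (y, t) of the plane {x = 0}, is
  coarsely bi-Lipschitz for d_par and almost constant in t along the horizontal lines of W.
  A Brouwer (Poincare-Miranda) argument on a parabolic rectangle inside HQ shows that such an F
  covers a parabolic ball of radius l(Q).  On the vertical plane W_theta, which contains
  Pi_theta(f(HQ)), the Heisenberg metric is d_par, and parabolic balls of radius r have
  Lebesgue measure 4 r^3; so any cover of Pi_theta(f(HQ)) by sets of diameters d_i has
  sum d_i^3 >= l(Q)^3.
*)

theory Submission
  imports Defs
begin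

section \<open>The Heisenberg metric in coordinates\<close>

lemma hmult_eq [simp]:
  "hmult (x1, y1, t1) (x2, y2, t2) = (x1 + x2, y1 + y2, t1 + t2 + (x1 * y2 - x2 * y1) / 2)"
  by (simp add: hmult_def)

lemma hinv_eq [simp]: "hinv (x, y, t) = (-x, -y, -t)"
  by (simp add: hinv_def)

lemma hnorm_eq [simp]: "hnorm (x, y, t) = max (sqrt (x\<^sup>2 + y\<^sup>2)) (sqrt \<bar>t\<bar>)"
  by (simp add: hnorm_def)

lemma rot_eq [simp]: "rot a (x, y, t) = (x * cos a - y * sin a, x * sin a + y * cos a, t)"
  by (simp add: rot_def)

lemma proj_eq [simp]: "proj (x, y, t) = (0, y, t + x * y / 2)"
  by (simp add: proj_def)

lemma dpar_eq [simp]: "dpar (y, t) (\<eta>, s) = max \<bar>y - \<eta>\<bar> (sqrt \<bar>t - s\<bar>)"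
  by (simp add: dpar_def)

lemma hdist_eq:
  "hdist (x1, y1, t1) (x2, y2, t2) =
     max (sqrt ((x1 - x2)\<^sup>2 + (y1 - y2)\<^sup>2)) (sqrt \<bar>t1 - t2 + (x1 * y2 - x2 * y1) / 2\<bar>)"
  by (simp add: hdist_def algebra_simps)

lemma hdist_nonneg: "0 \<le> hdist p q"
  by (cases p; cases q) (simp add: hdist_eq le_max_iff_disj)

lemma hdist_commute: "hdist p q = hdist q p"
proof -
  obtain x1 y1 t1 x2 y2 t2 where p: "p = (x1, y1, t1)" and q: "q = (x2, y2, t2)"
    by (cases p; cases q) auto
  have "t2 - t1 + (x2 * y1 - x1 * y2) / 2 = - (t1 - t2 + (x1 * y2 - x2 * y1) / 2)"
    by (simp add: field_simps)
  then show ?thesis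
    unfolding p q hdist_eq by (simp only: abs_minus_cancel power2_commute)
qed

lemma hdist_yt_plane: "hdist (0, u) (0, v) = dpar u v"
  by (cases u; cases v) (simp add: hdist_eq)

lemma abs_cross_le_norms: "\<bar>x1 * y2 - x2 * y1\<bar> \<le> sqrt (x1\<^sup>2 + y1\<^sup>2) * sqrt (x2\<^sup>2 + y2\<^sup>2)"
proof -
  have "(x1\<^sup>2 + y1\<^sup>2) * (x2\<^sup>2 + y2\<^sup>2) = (x1 * y2 - x2 * y1)\<^sup>2 + (x1 * x2 + y1 * y2)\<^sup>2"
    by algebra
  then have "(x1 * y2 - x2 * y1)\<^sup>2 \<le> (x1\<^sup>2 + y1\<^sup>2) * (x2\<^sup>2 + y2\<^sup>2)"
    by simp
  then show ?thesis
    by (metis real_sqrt_abs real_sqrt_le_mono real_sqrt_mult)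
qed

lemma hnorm_hmult_le: "hnorm (hmult p q) \<le> hnorm p + hnorm q"
proof -
  obtain x1 y1 t1 x2 y2 t2 where p: "p = (x1, y1, t1)" and q: "q = (x2, y2, t2)"
    by (cases p; cases q) auto
  define a b where "a = hnorm p" and "b = hnorm q"
  have a: "sqrt (x1\<^sup>2 + y1\<^sup>2) \<le> a" "sqrt \<bar>t1\<bar> \<le> a" and b: "sqrt (x2\<^sup>2 + y2\<^sup>2) \<le> b" "sqrt \<bar>t2\<bar> \<le> b"
    by (auto simp: a_def b_def p q)
  then have "0 \<le> a" "0 \<le> b"
    by (meson order_trans real_sqrt_ge_zero abs_ge_zero)+
  have horizontal: "sqrt ((x1 + x2)\<^sup>2 + (y1 + y2)\<^sup>2) \<le> a + b"
    using norm_triangle_ineq[of "(x1, y1)" "(x2, y2)"] a(1) b(1) by (simp add: norm_Pair)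
  have "sqrt (x1\<^sup>2 + y1\<^sup>2) * sqrt (x2\<^sup>2 + y2\<^sup>2) \<le> a * b"
    using a(1) b(1) \<open>0 \<le> a\<close> by (intro mult_mono) auto
  then have "\<bar>x1 * y2 - x2 * y1\<bar> \<le> a * b"
    using abs_cross_le_norms[of x1 y2 x2 y1] by (rule order_trans[rotated])
  then have "\<bar>x1 * y2 - x2 * y1\<bar> / 2 \<le> a * b / 2"
    by simp
  moreover have "\<bar>t1\<bar> \<le> a\<^sup>2" "\<bar>t2\<bar> \<le> b\<^sup>2"
    using a(2) b(2) by (auto intro: sqrt_le_D)
  moreover have "\<bar>t1 + t2 + (x1 * y2 - x2 * y1) / 2\<bar> \<le> \<bar>t1\<bar> + \<bar>t2\<bar> + \<bar>x1 * y2 - x2 * y1\<bar> / 2"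
    using abs_triangle_ineq[of "t1 + t2" "(x1 * y2 - x2 * y1) / 2"] abs_triangle_ineq[of t1 t2] by simp
  moreover have "a\<^sup>2 + b\<^sup>2 + a * b / 2 \<le> (a + b)\<^sup>2"
    using \<open>0 \<le> a\<close> \<open>0 \<le> b\<close> by (simp add: power2_eq_square algebra_simps)
  ultimately have "sqrt \<bar>t1 + t2 + (x1 * y2 - x2 * y1) / 2\<bar> \<le> a + b"
    using \<open>0 \<le> a\<close> \<open>0 \<le> b\<close> by (intro real_le_lsqrt) auto
  with horizontal have "hnorm (hmult p q) \<le> a + b"
    by (simp add: p q)
  then show ?thesis
    by (simp only: a_def b_def)
qed

lemma hdist_triangle: "hdist p r \<le> hdist p q + hdist q r"
proof -
  have "hmult (hinv r) p = hmult (hmult (hinv r) q) (hmult (hinv q) p)"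
    by (cases p; cases q; cases r) (simp add: field_simps)
  then show ?thesis
    using hnorm_hmult_le[of "hmult (hinv r) q" "hmult (hinv q) p"] by (simp add: hdist_def)
qed

lemma rot_rot: "rot a (rot b p) = rot (a + b) p"
  by (cases p) (simp add: cos_add sin_add algebra_simps)

lemma rot_zero [simp]: "rot 0 p = p"
  by (cases p) simp

lemma rot_neg_rot [simp]: "rot (-a) (rot a p) = p" "rot a (rot (-a) p) = p"
  by (simp_all add: rot_rot)

lemma snd_snd_rot [simp]: "snd (snd (rot a p)) = snd (snd p)"
  by (cases p) simp

lemma rot_hinv: "rot a (hinv p) = hinv (rot a p)"
  by (cases p) simp

lemma rot_hmult: "rot a (hmult p q) = hmult (rot a p) (rot a q)"
proof -
  obtain x1 y1 t1 x2 y2 t2 where p: "p = (x1, y1, t1)" and q: "q = (x2, y2, t2)"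
    by (cases p; cases q) auto
  have "(x1 * cos a - y1 * sin a) * (x2 * sin a + y2 * cos a)
      - (x2 * cos a - y2 * sin a) * (x1 * sin a + y1 * cos a) = x1 * y2 - x2 * y1"
    using sin_cos_squared_add[of a] by algebra
  then show ?thesis
    by (simp only: p q hmult_eq rot_eq) (simp add: algebra_simps)
qed

lemma hnorm_rot: "hnorm (rot a p) = hnorm p"
proof -
  obtain x y t where p: "p = (x, y, t)"
    by (cases p) auto
  have "(x * cos a - y * sin a)\<^sup>2 + (x * sin a + y * cos a)\<^sup>2 = x\<^sup>2 + y\<^sup>2"
    using sin_cos_squared_add[of a] by algebra
  then show ?thesis
    by (simp only: p hnorm_eq rot_eq)
qed

lemma hdist_rot: "hdist (rot a p) (rot a q) = hdist p q"
  unfolding hdist_def rot_hinv[symmetric] rot_hmult[symmetric] hnorm_rot ..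

lemma continuous_on_rot: "continuous_on A (rot a)"
proof -
  have eq: "rot a = (\<lambda>p. (fst p * cos a - fst (snd p) * sin a, fst p * sin a + fst (snd p) * cos a, snd (snd p)))"
    by (auto simp: rot_def)
  show ?thesis
    unfolding eq by (intro continuous_intros)
qed

lemma continuous_on_proj: "continuous_on A proj"
proof -
  have eq: "proj = (\<lambda>p. (0, fst (snd p), snd (snd p) + fst p * fst (snd p) / 2))"
    by (auto simp: proj_def)
  show ?thesis
    unfolding eq by (intro continuous_intros) auto
qed

lemma proj_eq_yt: "proj p = (0, snd (proj p))"
  by (cases p) simp

lemma hdist_proj_self: "hdist p (proj p) = \<bar>fst p\<bar>"
  by (cases p) (simp add: hdist_eq)

lemma hdist_le_hdist_proj: "hdist p q \<le> hdist (proj p) (proj q) + \<bar>fst p\<bar> + \<bar>fst q\<bar>"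
  using hdist_triangle[of p q "proj p"] hdist_triangle[of "proj p" q "proj q"]
    hdist_proj_self[of p] hdist_proj_self[of q] hdist_commute[of q "proj q"] by linarith

lemma hdist_proj_le_hdist: "hdist (proj p) (proj q) \<le> hdist p q + \<bar>fst p\<bar> + \<bar>fst q\<bar>"
  using hdist_triangle[of "proj p" "proj q" p] hdist_triangle[of p "proj q" q]
    hdist_proj_self[of p] hdist_proj_self[of q] hdist_commute[of p "proj p"] by linarith

lemma dpar_commute: "dpar u v = dpar v u"
  by (cases u; cases v) (simp add: abs_minus_commute)

lemma dpar_nonneg: "0 \<le> dpar u v"
  by (cases u; cases v) (simp add: le_max_iff_disj)

lemma dpar_eq_fst_snd: "dpar u v = max \<bar>fst u - fst v\<bar> (sqrt \<bar>snd u - snd v\<bar>)"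
  by (cases u; cases v) simp

lemma dpar_uminus_fst: "dpar (- fst u, snd u) (- fst v, snd v) = dpar u v"
  by (simp add: dpar_eq_fst_snd abs_minus_commute)

lemma pball_eq_cbox:
  assumes "0 \<le> r"
  shows "pball (y, t) r = cbox (y - r, t - r\<^sup>2) (y + r, t + r\<^sup>2)"
proof -
  have "sqrt \<bar>t - s\<bar> \<le> r \<longleftrightarrow> \<bar>t - s\<bar> \<le> r\<^sup>2" for s
    using assms by (auto intro: real_le_lsqrt dest: sqrt_le_D)
  then show ?thesis
    by (auto simp: pball_def cbox_Pair_iff abs_le_iff)
qed

lemma emeasure_pball:
  assumes "0 \<le> r"
  shows "emeasure lborel (pball z r) = ennreal (4 * r ^ 3)"
proof -
  obtain y t where "z = (y, t)"
    by fastforce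
  with assms show ?thesis
    by (simp add: pball_eq_cbox emeasure_lborel_cbox_eq Basis_prod_def inner_Pair
        power2_eq_square power3_eq_cube)
qed

section \<open>Vertical subgroups and horizontal lines\<close>

lemma vertical_subgroup_iff:
  "vertical_subgroup V \<longleftrightarrow> (\<exists>a b. (a, b) \<noteq> (0, 0) \<and> V = {(x, y, t). \<exists>s. x = s * a \<and> y = s * b})"
proof
  assume V0: "vertical_subgroup V"
  then obtain x0 y0 a b where ab: "(a, b) \<noteq> (0, 0)"
    and V: "V = {(x, y, t). \<exists>s. x = x0 + s * a \<and> y = y0 + s * b}"
    unfolding vertical_subgroup_def vertical_plane_def by blast
  moreover have "(0, 0, 0) \<in> V"
    using V0 by (simp add: vertical_subgroup_def)
  ultimately obtain s0 where s0: "0 = x0 + s0 * a" "0 = y0 + s0 * b"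
    by blast
  have "(\<exists>s. x = x0 + s * a \<and> y = y0 + s * b) \<longleftrightarrow> (\<exists>s. x = s * a \<and> y = s * b)" for x y
  proof
    assume "\<exists>s. x = x0 + s * a \<and> y = y0 + s * b"
    then obtain s where "x = x0 + s * a" "y = y0 + s * b"
      by blast
    with s0 have "x = (s - s0) * a \<and> y = (s - s0) * b"
      by (simp add: algebra_simps)
    then show "\<exists>s. x = s * a \<and> y = s * b" ..
  next
    assume "\<exists>s. x = s * a \<and> y = s * b"
    then obtain s where "x = s * a" "y = s * b"
      by blast
    with s0 have "x = x0 + (s + s0) * a \<and> y = y0 + (s + s0) * b"
      by (simp add: algebra_simps)
    then show "\<exists>s. x = x0 + s * a \<and> y = y0 + s * b" ..
  qed
  with ab V show "\<exists>a b. (a, b) \<noteq> (0, 0) \<and> V = {(x, y, t). \<exists>s. x = s * a \<and> y = s * b}"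
    by blast
next
  assume "\<exists>a b. (a, b) \<noteq> (0, 0) \<and> V = {(x, y, t). \<exists>s. x = s * a \<and> y = s * b}"
  then obtain a b where ab: "(a, b) \<noteq> (0, 0)" and V: "V = {(x, y, t). \<exists>s. x = 0 + s * a \<and> y = 0 + s * b}"
    by auto
  moreover have "(0, 0, 0) \<in> V"
    unfolding V by (auto intro: exI[of _ 0])
  ultimately show "vertical_subgroup V"
    unfolding vertical_subgroup_def vertical_plane_def by blast
qed

lemma rot_scaled:
  "rot \<phi> (s * a, s * b, t) = (s * (a * cos \<phi> - b * sin \<phi>), s * (a * sin \<phi> + b * cos \<phi>), t)"
  by (simp add: algebra_simps)

lemma rot_direction_nonzero:
  fixes a b \<phi> :: real
  assumes "(a, b) \<noteq> (0, 0)"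
  shows "(a * cos \<phi> - b * sin \<phi>, a * sin \<phi> + b * cos \<phi>) \<noteq> (0, 0)"
proof
  assume "(a * cos \<phi> - b * sin \<phi>, a * sin \<phi> + b * cos \<phi>) = (0, 0)"
  then have "rot \<phi> (a, b, 0) = (0, 0, 0)"
    by simp
  then have "(a, b, 0) = rot (-\<phi>) (0, 0, 0)"
    by (metis rot_neg_rot(1))
  with assms show False
    by simp
qed

lemma vertical_subgroup_rot:
  assumes "vertical_subgroup V"
  shows "vertical_subgroup (rot \<phi> ` V)"
proof -
  obtain a b where ab: "(a, b) \<noteq> (0, 0)" and V: "V = {(x, y, t). \<exists>s. x = s * a \<and> y = s * b}"
    using assms by (auto simp: vertical_subgroup_iff)
  define a' b' where "a' = a * cos \<phi> - b * sin \<phi>" and "b' = a * sin \<phi> + b * cos \<phi>"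
  have "rot \<phi> ` V = {(x, y, t). \<exists>s. x = s * a' \<and> y = s * b'}"
  proof (intro equalityI subsetI)
    fix p assume "p \<in> rot \<phi> ` V"
    then show "p \<in> {(x, y, t). \<exists>s. x = s * a' \<and> y = s * b'}"
      by (auto simp: V a'_def b'_def rot_scaled simp del: rot_eq)
  next
    fix p :: heis assume "p \<in> {(x, y, t). \<exists>s. x = s * a' \<and> y = s * b'}"
    then obtain s t :: real where "p = rot \<phi> (s * a, s * b, t)"
      by (auto simp: a'_def b'_def rot_scaled simp del: rot_eq)
    then show "p \<in> rot \<phi> ` V"
      by (auto simp: V simp del: rot_eq)
  qed
  moreover have "(a', b') \<noteq> (0, 0)"
    unfolding a'_def b'_def using ab by (rule rot_direction_nonzero)
  ultimately show ?thesis
    by (auto simp: vertical_subgroup_iff)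
qed

lemma horizontal_line_rot:
  assumes "horizontal_line L"
  shows "horizontal_line (rot \<phi> ` L)"
proof -
  obtain p a b where ab: "(a, b) \<noteq> (0, 0)" and L: "L = {hmult p (s * a, s * b, 0) | s. True}"
    using assms unfolding horizontal_line_def by blast
  define a' b' where "a' = a * cos \<phi> - b * sin \<phi>" and "b' = a * sin \<phi> + b * cos \<phi>"
  have rot_point: "rot \<phi> (hmult p (s * a, s * b, 0)) = hmult (rot \<phi> p) (s * a', s * b', 0)" for s
    by (simp only: rot_hmult rot_scaled a'_def b'_def)
  have "rot \<phi> ` L = {hmult (rot \<phi> p) (s * a', s * b', 0) | s. True}"
    unfolding L setcompr_eq_image image_image rot_point ..
  moreover have "(a', b') \<noteq> (0, 0)"
    unfolding a'_def b'_def using ab by (rule rot_direction_nonzero)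
  ultimately show ?thesis
    unfolding horizontal_line_def by blast
qed

lemma vertical_subgroup_has_line:
  assumes "vertical_subgroup V"
  shows "\<exists>L. horizontal_line L \<and> L \<subseteq> V \<and> (0, 0, 0) \<in> L"
proof -
  obtain a b where ab: "(a, b) \<noteq> (0, 0)" and V: "V = {(x, y, t). \<exists>s. x = s * a \<and> y = s * b}"
    using assms by (auto simp: vertical_subgroup_iff)
  define L where "L = {hmult (0, 0, 0) (s * a, s * b, 0) | s. True}"
  have "horizontal_line L"
    unfolding horizontal_line_def L_def using ab by blast
  moreover have "L \<subseteq> V" "(0, 0, 0) \<in> L"
    by (auto simp: L_def V intro: exI[of _ 0])
  ultimately show ?thesis
    by blast
qed

lemma line_slope_graph: "line_slope {(a * y + b, y, b * y / 2 + c) | y. True} = ereal \<bar>a\<bar>"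
proof -
  let ?G = "\<lambda>a b c. {(a * y + b, y, b * y / 2 + c) | y::real. True}"
  have "a' = a" if G: "?G a b c = ?G a' b' c'" for a' b' c'
  proof -
    have "(b', 0, c') \<in> ?G a' b' c'" "(a' + b', 1, b' / 2 + c') \<in> ?G a' b' c'"
      by force+
    then have "(b', 0, c') \<in> ?G a b c" "(a' + b', 1, b' / 2 + c') \<in> ?G a b c"
      unfolding G .
    then show "a' = a"
      by auto
  qed
  then have "(THE a'. \<exists>b' c'. ?G a b c = ?G a' b' c') = a"
    by (intro the_equality) blast+
  then show ?thesis
    unfolding line_slope_def by auto
qed

lemma vertical_subgroup_slope_zero:
  assumes "vertical_subgroup V" "plane_slope V = 0" "p \<in> V"
  shows "fst p = 0"
proof -
  obtain a b where V: "V = {(x, y, t). \<exists>s. x = s * a \<and> y = s * b}"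
    using assms(1) by (auto simp: vertical_subgroup_iff)
  define L where "L = (SOME L. horizontal_line L \<and> L \<subseteq> V)"
  have "horizontal_line L" "L \<subseteq> V"
    unfolding L_def using vertical_subgroup_has_line[OF assms(1)] by (metis (no_types, lifting) someI_ex)+
  have "line_slope L = 0"
    using assms(2) by (simp add: plane_slope_def L_def)
  then obtain a0 b0 c0 where L: "L = {(a0 * y + b0, y, b0 * y / 2 + c0) | y. True}"
    unfolding line_slope_def by (auto split: if_splits)
  with \<open>line_slope L = 0\<close> have "a0 = 0"
    using line_slope_graph[of a0 b0 c0, folded L] by (simp add: zero_ereal_def)
  \<comment> \<open>the slope-zero line contains two points that differ only in y, so V has no x-direction\<close>
  then have "(b0, 0, c0) \<in> V" "(b0, 1, b0 / 2 + c0) \<in> V"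
    using \<open>L \<subseteq> V\<close> unfolding L by force+
  then have "\<exists>s. b0 = s * a \<and> 0 = s * b" "\<exists>s. b0 = s * a \<and> 1 = s * b"
    by (simp_all add: V)
  then obtain s0 s1 where "b0 = s0 * a" "0 = s0 * b" "b0 = s1 * a" "1 = s1 * b"
    by blast
  then have "(s1 - s0) * a = 0" "(s1 - s0) * b = 1"
    by (simp_all add: algebra_simps)
  then have "a = 0"
    by auto
  with assms(3) show ?thesis
    by (auto simp: V)
qed

lemma horizontal_line_in_yt_plane:
  assumes "horizontal_line L" and "\<And>q. q \<in> L \<Longrightarrow> fst q = 0"
  shows "\<exists>c. \<forall>q\<in>L. snd (snd q) = c"
proof -
  obtain p a b where L: "L = {hmult p (s * a, s * b, 0) | s. True}"
    using assms(1) unfolding horizontal_line_def by blast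
  obtain xp yp tp where p: "p = (xp, yp, tp)"
    by (cases p)
  have "fst (hmult p (s * a, s * b, 0)) = 0" for s
    using assms(2) L by blast
  then have "xp + s * a = 0" for s
    by (simp add: p)
  from this[of 0] this[of 1] have "xp = 0" "a = 0"
    by simp_all
  then have "snd (snd (hmult p (s * a, s * b, 0))) = tp" for s
    by (simp add: p)
  then show ?thesis
    unfolding L by blast
qed

lemma angle_zero_horizontal_line:
  assumes "vertical_subgroup V" "plane_angle V \<theta> = 0" "horizontal_line L" "L \<subseteq> V"
  shows "\<exists>c. \<forall>q\<in>L. fst (rot (-\<theta>) q) = 0 \<and> snd (snd q) = c"
proof -
  have fst_zero: "fst (rot (-\<theta>) q) = 0" if "q \<in> L" for q
  proof -
    have "rot (-\<theta>) q \<in> rot (-\<theta>) ` V"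
      using that assms(4) by blast
    then show ?thesis
      using vertical_subgroup_slope_zero[OF vertical_subgroup_rot[OF assms(1)]] assms(2)
      unfolding plane_angle_def by blast
  qed
  obtain c where "\<forall>q\<in>rot (-\<theta>) ` L. snd (snd q) = c"
    using horizontal_line_in_yt_plane[OF horizontal_line_rot[OF assms(3)]] fst_zero by blast
  with fst_zero show ?thesis
    by auto
qed

section \<open>A lower bound for Hausdorff measure\<close>

lemma mdiam_upper:
  assumes "bdd_above {d x y | x y. x \<in> C \<and> y \<in> C}" "x \<in> C" "y \<in> C"
  shows "d x y \<le> mdiam d C"
  using assms by (auto simp: mdiam_def intro!: cSup_upper)

lemma image_subset_pball_mdiam:
  fixes \<pi> :: "'a \<Rightarrow> real \<times> real"
  assumes lip: "\<And>p q. p \<in> S \<Longrightarrow> q \<in> S \<Longrightarrow> dpar (\<pi> p) (\<pi> q) \<le> d p q"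
    and bdd: "bdd_above {d x y | x y. x \<in> C \<and> y \<in> C}"
  shows "\<exists>B\<in>sets lborel. \<pi> ` (C \<inter> S) \<subseteq> B \<and> emeasure lborel B \<le> 4 * ennreal (mdiam d C powr 3)"
proof (cases "C \<inter> S = {}")
  case True
  then show ?thesis
    by (intro bexI[of _ "{}"]) auto
next
  case False
  then obtain p where p: "p \<in> C" "p \<in> S"
    by blast
  define r where "r = mdiam d C"
  have "0 \<le> r"
    using lip[OF p(2) p(2)] mdiam_upper[OF bdd p(1) p(1)] dpar_nonneg[of "\<pi> p" "\<pi> p"]
    unfolding r_def by linarith
  obtain y t where yt: "\<pi> p = (y, t)"
    by fastforce
  have "\<pi> ` (C \<inter> S) \<subseteq> pball (\<pi> p) r"
  proof
    fix z assume "z \<in> \<pi> ` (C \<inter> S)"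
    then obtain q where "q \<in> C" "q \<in> S" "z = \<pi> q"
      by blast
    then have "dpar (\<pi> p) z \<le> r"
      using lip[OF p(2)] mdiam_upper[OF bdd p(1)] unfolding r_def by (meson order_trans)
    then show "z \<in> pball (\<pi> p) r"
      by (simp add: pball_def)
  qed
  moreover have "pball (\<pi> p) r \<in> sets lborel"
    using \<open>0 \<le> r\<close> by (simp add: yt pball_eq_cbox)
  moreover have "emeasure lborel (pball (\<pi> p) r) = 4 * ennreal (r powr 3)"
    using \<open>0 \<le> r\<close> by (simp add: emeasure_pball ennreal_mult powr_realpow)
  ultimately show ?thesis
    unfolding r_def by (intro bexI[of _ "pball (\<pi> p) (mdiam d C)"]) auto
qed

lemma lborel_le_cover_sum:
  fixes d :: "'a \<Rightarrow> 'a \<Rightarrow> real" and \<pi> :: "'a \<Rightarrow> real \<times> real"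
  assumes lip: "\<And>p q. p \<in> S \<Longrightarrow> q \<in> S \<Longrightarrow> dpar (\<pi> p) (\<pi> q) \<le> d p q"
    and A: "A \<in> sets lborel" "A \<subseteq> \<pi> ` S"
    and cover: "S \<subseteq> (\<Union>i. C i)" and bdd: "\<And>i. bdd_above {d x y | x y. x \<in> C i \<and> y \<in> C i}"
  shows "emeasure lborel A \<le> 4 * (\<Sum>i. ennreal (mdiam d (C i) powr 3))"
proof -
  have "\<forall>i. \<exists>B\<in>sets lborel. \<pi> ` (C i \<inter> S) \<subseteq> B
      \<and> emeasure lborel B \<le> 4 * ennreal (mdiam d (C i) powr 3)"
    by (intro allI image_subset_pball_mdiam[OF lip bdd])
  from choice[OF this[unfolded Bex_def]] obtain B where "\<forall>i. B i \<in> sets lborel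
      \<and> \<pi> ` (C i \<inter> S) \<subseteq> B i \<and> emeasure lborel (B i) \<le> 4 * ennreal (mdiam d (C i) powr 3)"
    by blast
  then have B: "\<And>i. B i \<in> sets lborel" "\<And>i. \<pi> ` (C i \<inter> S) \<subseteq> B i"
    "\<And>i. emeasure lborel (B i) \<le> 4 * ennreal (mdiam d (C i) powr 3)"
    by simp_all
  have "A \<subseteq> (\<Union>i. B i)"
  proof
    fix z assume "z \<in> A"
    then obtain q where q: "q \<in> S" "z = \<pi> q"
      using A(2) by blast
    then obtain i where "q \<in> C i"
      using cover by blast
    with q show "z \<in> (\<Union>i. B i)"
      using B(2)[of i] by blast
  qed
  then have "emeasure lborel A \<le> emeasure lborel (\<Union>i. B i)"
    using B(1) by (intro emeasure_mono) auto
  also have "\<dots> \<le> (\<Sum>i. emeasure lborel (B i))"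
    using B(1) by (intro emeasure_subadditive_countably) auto
  also have "\<dots> \<le> (\<Sum>i. 4 * ennreal (mdiam d (C i) powr 3))"
    using B(3) by (intro suminf_le) auto
  finally show ?thesis
    by simp
qed

lemma hausdorff_measure_ge_lborel:
  fixes d :: "'a \<Rightarrow> 'a \<Rightarrow> real" and \<pi> :: "'a \<Rightarrow> real \<times> real"
  assumes lip: "\<And>p q. p \<in> S \<Longrightarrow> q \<in> S \<Longrightarrow> dpar (\<pi> p) (\<pi> q) \<le> d p q"
    and A: "A \<in> sets lborel" "A \<subseteq> \<pi> ` S"
  shows "emeasure lborel A / 4 \<le> hausdorff_measure d 3 S"
proof -
  have cover_bound: "emeasure lborel A / 4 \<le> (\<Sum>i. ennreal (mdiam d (C i) powr 3))"
    if "S \<subseteq> (\<Union>i. C i)" "\<And>i. bdd_above {d x y | x y. x \<in> C i \<and> y \<in> C i}" for C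
    using lborel_le_cover_sum[OF lip A that] by (rule divide_le_posI_ennreal[rotated]) simp_all
  have "emeasure lborel A / 4 \<le> hausdorff_content d 3 1 S"
    unfolding hausdorff_content_def by (rule INF_greatest, rule cover_bound) auto
  also have "\<dots> \<le> hausdorff_measure d 3 S"
    unfolding hausdorff_measure_def by (rule SUP_upper) auto
  finally show ?thesis .
qed

section \<open>Poincare-Miranda in the plane\<close>

lemma clamp_fixed_point:
  fixes a b x g :: real
  assumes "a \<le> x" "x \<le> b" "max a (min b (x - g)) = x" "x = a \<Longrightarrow> g \<le> 0" "x = b \<Longrightarrow> 0 \<le> g"
  shows "g = 0"
  using assms by (auto simp: max_def min_def split: if_splits)

lemma poincare_miranda_2d:
  fixes G :: "real \<times> real \<Rightarrow> real \<times> real"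
  assumes "a1 \<le> b1" "a2 \<le> b2" and cont: "continuous_on (cbox (a1, a2) (b1, b2)) G"
    and sides: "\<And>t. a2 \<le> t \<Longrightarrow> t \<le> b2 \<Longrightarrow> fst (G (a1, t)) \<le> 0 \<and> 0 \<le> fst (G (b1, t))"
    and bottom_top: "\<And>y. a1 \<le> y \<Longrightarrow> y \<le> b1 \<Longrightarrow> snd (G (y, a2)) \<le> 0 \<and> 0 \<le> snd (G (y, b2))"
  shows "\<exists>w\<in>cbox (a1, a2) (b1, b2). G w = 0"
proof -
  define K where "K = cbox (a1, a2) (b1, b2)"
  \<comment> \<open>by the sign conditions, fixed points of the clamped map are zeros of G\<close>
  define h where "h w = (max a1 (min b1 (fst w - fst (G w))), max a2 (min b2 (snd w - snd (G w))))" for w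
  have "continuous_on K h"
    unfolding h_def K_def using cont by (intro continuous_intros) auto
  moreover have "h \<in> K \<rightarrow> K"
    using assms(1,2) by (auto simp: h_def K_def cbox_Pair_iff)
  moreover have "(a1, a2) \<in> K"
    using assms(1,2) by (simp add: K_def cbox_Pair_iff)
  then have "K \<noteq> {}"
    by blast
  moreover have "compact K" "convex K"
    by (simp_all add: K_def compact_cbox convex_box)
  ultimately obtain w where w: "w \<in> K" "h w = w"
    using brouwer[of K h] by blast
  obtain y t where yt: "w = (y, t)"
    by fastforce
  have box: "a1 \<le> y" "y \<le> b1" "a2 \<le> t" "t \<le> b2"
    using w(1) by (auto simp: K_def yt cbox_Pair_iff)
  have fixed: "max a1 (min b1 (y - fst (G w))) = y" "max a2 (min b2 (t - snd (G w))) = t"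
    using w(2) by (simp_all add: h_def yt)
  have "fst (G w) = 0"
    using clamp_fixed_point[OF box(1,2) fixed(1)] sides[OF box(3,4)] by (auto simp: yt)
  moreover have "snd (G w) = 0"
    using clamp_fixed_point[OF box(3,4) fixed(2)] bottom_top[OF box(1,2)] by (auto simp: yt)
  ultimately have "G w = 0"
    by (simp add: prod_eq_iff)
  with w(1) show ?thesis
    unfolding K_def by blast
qed

lemma orientation_sign:
  fixes f g :: "'a \<Rightarrow> real"
  assumes "(\<forall>y\<in>Y. f y \<le> c \<and> d \<le> g y) \<or> (\<forall>y\<in>Y. g y \<le> c \<and> d \<le> f y)" "c \<le> B" "B \<le> d"
  obtains \<sigma> :: real where "\<sigma> \<noteq> 0" "\<And>y. y \<in> Y \<Longrightarrow> \<sigma> * (f y - B) \<le> 0 \<and> 0 \<le> \<sigma> * (g y - B)"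
  using assms(1)
proof (elim disjE)
  assume "\<forall>y\<in>Y. f y \<le> c \<and> d \<le> g y"
  with assms(2,3) show thesis
    by (intro that[of 1]) fastforce+
next
  assume "\<forall>y\<in>Y. g y \<le> c \<and> d \<le> f y"
  with assms(2,3) show thesis
    by (intro that[of "-1"]) fastforce+
qed

lemma cbox_subset_image_rectangle:
  fixes F :: "real \<times> real \<Rightarrow> real \<times> real"
  assumes "y1 \<le> y2" "t1 \<le> t2" and cont: "continuous_on (cbox (y1, t1) (y2, t2)) F"
    and sides: "\<And>t. t1 \<le> t \<Longrightarrow> t \<le> t2 \<Longrightarrow> fst (F (y1, t)) \<le> a \<and> b \<le> fst (F (y2, t))"
    and bottom_top: "(\<forall>y\<in>{y1..y2}. snd (F (y, t1)) \<le> c \<and> d \<le> snd (F (y, t2)))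
      \<or> (\<forall>y\<in>{y1..y2}. snd (F (y, t2)) \<le> c \<and> d \<le> snd (F (y, t1)))"
  shows "cbox (a, c) (b, d) \<subseteq> F ` cbox (y1, t1) (y2, t2)"
proof
  fix z assume "z \<in> cbox (a, c) (b, d)"
  then obtain A B where z: "z = (A, B)" "a \<le> A" "A \<le> b" "c \<le> B" "B \<le> d"
    by (cases z) (auto simp: cbox_Pair_iff)
  obtain \<sigma> :: real where "\<sigma> \<noteq> 0"
    and \<sigma>: "\<And>y. y \<in> {y1..y2} \<Longrightarrow> \<sigma> * (snd (F (y, t1)) - B) \<le> 0 \<and> 0 \<le> \<sigma> * (snd (F (y, t2)) - B)"
    using orientation_sign[OF bottom_top z(4,5)] by metis
  define G where "G w = (fst (F w) - A, \<sigma> * (snd (F w) - B))" for w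
  have "\<exists>w\<in>cbox (y1, t1) (y2, t2). G w = 0"
  proof (rule poincare_miranda_2d)
    show "continuous_on (cbox (y1, t1) (y2, t2)) G"
      unfolding G_def using cont by (intro continuous_intros) auto
    show "fst (G (y1, t)) \<le> 0 \<and> 0 \<le> fst (G (y2, t))" if "t1 \<le> t" "t \<le> t2" for t
      using sides[OF that] z by (simp add: G_def)
    show "snd (G (y, t1)) \<le> 0 \<and> 0 \<le> snd (G (y, t2))" if "y1 \<le> y" "y \<le> y2" for y
      using \<sigma>[of y] that by (simp add: G_def)
  qed (use assms(1,2) in auto)
  then obtain w where w: "w \<in> cbox (y1, t1) (y2, t2)" "G w = 0"
    by blast
  with \<open>\<sigma> \<noteq> 0\<close> have "F w = z"
    by (simp add: G_def z prod_eq_iff)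
  with w(1) show "z \<in> F ` cbox (y1, t1) (y2, t2)"
    by blast
qed

section \<open>Coarse maps of the parabolic plane cover parabolic balls\<close>

lemma separating_level:
  fixes T1 T2 l :: real
  assumes gap: "49 / 16 * l\<^sup>2 \<le> \<bar>T1 - T2\<bar>"
    and near: "\<forall>y\<in>Y. \<bar>f y - T1\<bar> < l\<^sup>2 / 16" "\<forall>y\<in>Y. \<bar>g y - T2\<bar> < l\<^sup>2 / 16"
  obtains c where "(\<forall>y\<in>Y. f y \<le> c \<and> c + 2 * l\<^sup>2 \<le> g y) \<or> (\<forall>y\<in>Y. g y \<le> c \<and> c + 2 * l\<^sup>2 \<le> f y)"
proof (cases "T1 \<le> T2")
  case True
  show ?thesis
  proof (rule that[of "T1 + l\<^sup>2 / 2"], rule disjI1, intro ballI conjI)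
    fix y assume "y \<in> Y"
    with near have "\<bar>f y - T1\<bar> < l\<^sup>2 / 16" "\<bar>g y - T2\<bar> < l\<^sup>2 / 16"
      by auto
    with gap True zero_le_power2[of l] show "f y \<le> T1 + l\<^sup>2 / 2" "T1 + l\<^sup>2 / 2 + 2 * l\<^sup>2 \<le> g y"
      unfolding abs_less_iff abs_le_iff by linarith+
  qed
next
  case False
  show ?thesis
  proof (rule that[of "T2 + l\<^sup>2 / 2"], rule disjI2, intro ballI conjI)
    fix y assume "y \<in> Y"
    with near have "\<bar>f y - T1\<bar> < l\<^sup>2 / 16" "\<bar>g y - T2\<bar> < l\<^sup>2 / 16"
      by auto
    with gap False zero_le_power2[of l] show "g y \<le> T2 + l\<^sup>2 / 2" "T2 + l\<^sup>2 / 2 + 2 * l\<^sup>2 \<le> f y"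
      unfolding abs_less_iff abs_le_iff by linarith+
  qed
qed

locale coarse_parabolic_map =
  fixes F :: "real \<times> real \<Rightarrow> real \<times> real" and M l D y0 t0 R :: real
  assumes M_ge_1: "1 \<le> M" and l_pos: "0 < l" and D_nonneg: "0 \<le> D" and D_small: "D < l / 8"
    and R_large: "4 * M ^ 3 * l \<le> R"
    and continuous: "continuous_on (pball (y0, t0) R) F"
    and snd_almost_constant: "\<And>y y' t. (y, t) \<in> pball (y0, t0) R \<Longrightarrow> (y', t) \<in> pball (y0, t0) R
      \<Longrightarrow> \<bar>snd (F (y, t)) - snd (F (y', t))\<bar> \<le> 4 * D\<^sup>2"
    and dpar_lower: "\<And>w v. w \<in> pball (y0, t0) R \<Longrightarrow> v \<in> pball (y0, t0) R
      \<Longrightarrow> dpar w v / M - 2 * D \<le> dpar (F w) (F v)"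
    and fst_upper: "\<And>w v. w \<in> pball (y0, t0) R \<Longrightarrow> v \<in> pball (y0, t0) R
      \<Longrightarrow> \<bar>fst (F w) - fst (F v)\<bar> \<le> M * dpar w v + 2 * D"
begin

lemma M_pos: "0 < M"
  using M_ge_1 by simp

lemma le_M_squared: "l \<le> M\<^sup>2 * l"
  using M_ge_1 l_pos by (simp add: one_le_power)

lemma rho_le_R: "2 * M * l \<le> R"
proof -
  have "M ^ 1 \<le> M ^ 3"
    using M_ge_1 by (intro power_increasing) auto
  then have "M * l \<le> M ^ 3 * l"
    using l_pos by simp
  then show ?thesis
    using R_large mult_pos_pos[OF M_pos l_pos] unfolding mult.assoc by linarith
qed

lemma R_pos: "0 < R"
  using rho_le_R M_pos l_pos by (smt (verit) mult_pos_pos)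

lemma mem_pball_rectangle:
  assumes "\<bar>y - y0\<bar> \<le> R" "\<bar>t - t0\<bar> \<le> (2 * M * l)\<^sup>2"
  shows "(y, t) \<in> pball (y0, t0) R"
proof -
  have "sqrt \<bar>t0 - t\<bar> \<le> 2 * M * l"
    using assms(2) M_pos l_pos by (intro real_le_lsqrt) (auto simp: abs_minus_commute)
  then show ?thesis
    using assms(1) rho_le_R by (simp add: pball_def abs_minus_commute)
qed

lemma sqrt_abs_le_2D: "\<bar>x\<bar> \<le> 4 * D\<^sup>2 \<Longrightarrow> sqrt \<bar>x\<bar> \<le> 2 * D"
  using D_nonneg by (intro real_le_lsqrt) (auto simp: power2_eq_square)

lemma fst_spread: "8 * (M\<^sup>2 * l) - 2 * D \<le> \<bar>fst (F (y0 + R, t0)) - fst (F (y0 - R, t0))\<bar>"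
proof -
  have left: "(y0 - R, t0) \<in> pball (y0, t0) R" and right: "(y0 + R, t0) \<in> pball (y0, t0) R"
    using R_pos by (auto intro: mem_pball_rectangle)
  have "sqrt \<bar>snd (F (y0 + R, t0)) - snd (F (y0 - R, t0))\<bar> \<le> 2 * D"
    using snd_almost_constant[OF right left] by (rule sqrt_abs_le_2D)
  then have "dpar (F (y0 + R, t0)) (F (y0 - R, t0)) \<le> max \<bar>fst (F (y0 + R, t0)) - fst (F (y0 - R, t0))\<bar> (2 * D)"
    by (auto simp: dpar_eq_fst_snd)
  moreover have "2 * R / M - 2 * D \<le> dpar (F (y0 + R, t0)) (F (y0 - R, t0))"
    using dpar_lower[OF right left] R_pos by simp
  moreover have "8 * (M\<^sup>2 * l) \<le> 2 * R / M"
    using R_large M_pos by (simp add: field_simps power2_eq_square power3_eq_cube)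
  moreover have "2 * D < 8 * (M\<^sup>2 * l) - 2 * D"
    using le_M_squared D_small l_pos by linarith
  ultimately show ?thesis
    by (auto simp: le_max_iff_disj)
qed

lemma fst_drift:
  assumes "\<bar>y - y0\<bar> \<le> R" "\<bar>t - t0\<bar> \<le> (2 * M * l)\<^sup>2"
  shows "\<bar>fst (F (y, t)) - fst (F (y, t0))\<bar> \<le> 2 * (M\<^sup>2 * l) + 2 * D"
proof -
  have w: "(y, t) \<in> pball (y0, t0) R" "(y, t0) \<in> pball (y0, t0) R"
    using assms l_pos by (auto intro: mem_pball_rectangle)
  have "dpar (y, t) (y, t0) \<le> 2 * M * l"
    using assms(2) M_pos l_pos by (simp, intro real_le_lsqrt) auto
  then have "M * dpar (y, t) (y, t0) \<le> M * (2 * M * l)"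
    using M_pos by simp
  moreover have "M * (2 * M * l) = 2 * (M\<^sup>2 * l)"
    by (simp add: power2_eq_square)
  ultimately show ?thesis
    using fst_upper[OF w] by linarith
qed

lemma fst_edges_separated:
  assumes "fst (F (y0 - R, t0)) \<le> fst (F (y0 + R, t0))"
  obtains a where "\<And>t. \<bar>t - t0\<bar> \<le> (2 * M * l)\<^sup>2 \<Longrightarrow> fst (F (y0 - R, t)) \<le> a \<and> a + 2 * l \<le> fst (F (y0 + R, t))"
proof (rule that[of "fst (F (y0 - R, t0)) + 2 * (M\<^sup>2 * l) + l / 2"])
  fix t assume "\<bar>t - t0\<bar> \<le> (2 * M * l)\<^sup>2"
  then have "\<bar>fst (F (y0 - R, t)) - fst (F (y0 - R, t0))\<bar> \<le> 2 * (M\<^sup>2 * l) + 2 * D"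
    "\<bar>fst (F (y0 + R, t)) - fst (F (y0 + R, t0))\<bar> \<le> 2 * (M\<^sup>2 * l) + 2 * D"
    using R_pos by (auto intro: fst_drift)
  with assms fst_spread le_M_squared D_small D_nonneg
  show "fst (F (y0 - R, t)) \<le> fst (F (y0 - R, t0)) + 2 * (M\<^sup>2 * l) + l / 2
    \<and> fst (F (y0 - R, t0)) + 2 * (M\<^sup>2 * l) + l / 2 + 2 * l \<le> fst (F (y0 + R, t))"
    unfolding abs_le_iff by linarith
qed

lemma fst_level_crossing:
  assumes "\<bar>t - t0\<bar> \<le> (2 * M * l)\<^sup>2" "fst (F (y0 - R, t)) \<le> a" "a \<le> fst (F (y0 + R, t))"
  obtains y where "\<bar>y - y0\<bar> \<le> R" "fst (F (y, t)) = a"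
proof -
  have "(\<lambda>y. (y, t)) ` {y0 - R..y0 + R} \<subseteq> pball (y0, t0) R"
    using assms(1) by (auto intro!: mem_pball_rectangle)
  then have "continuous_on {y0 - R..y0 + R} (\<lambda>y. F (y, t))"
    by (intro continuous_on_compose2[OF continuous]) (auto intro: continuous_intros)
  then have "continuous_on {y0 - R..y0 + R} (\<lambda>y. fst (F (y, t)))"
    by (rule continuous_on_fst)
  then have "\<exists>y. y0 - R \<le> y \<and> y \<le> y0 + R \<and> fst (F (y, t)) = a"
    using assms(2,3) R_pos by (intro IVT') auto
  then obtain y where "y0 - R \<le> y" "y \<le> y0 + R" "fst (F (y, t)) = a"
    by blast
  then show ?thesis
    by (intro that[of y]) (auto simp: abs_le_iff)
qed

lemma snd_close_on_level:
  assumes "\<bar>y - y0\<bar> \<le> R" "\<bar>y' - y0\<bar> \<le> R" "\<bar>t - t0\<bar> \<le> (2 * M * l)\<^sup>2"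
  shows "\<bar>snd (F (y, t)) - snd (F (y', t))\<bar> < l\<^sup>2 / 16"
proof -
  have "D\<^sup>2 < (l / 8)\<^sup>2"
    using D_nonneg D_small by (intro power_strict_mono) auto
  then have "4 * D\<^sup>2 < l\<^sup>2 / 16"
    by (simp add: power_divide)
  with assms show ?thesis
    using snd_almost_constant[of y t y'] by (smt (verit) mem_pball_rectangle)
qed

lemma snd_gap_at_crossings:
  assumes "\<bar>y1 - y0\<bar> \<le> R" "\<bar>y2 - y0\<bar> \<le> R"
    and "fst (F (y1, t0 - (2 * M * l)\<^sup>2)) = fst (F (y2, t0 + (2 * M * l)\<^sup>2))"
  shows "49 / 16 * l\<^sup>2 \<le> \<bar>snd (F (y1, t0 - (2 * M * l)\<^sup>2)) - snd (F (y2, t0 + (2 * M * l)\<^sup>2))\<bar>"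
    (is "_ \<le> \<bar>?T1 - ?T2\<bar>")
proof -
  let ?w1 = "(y1, t0 - (2 * M * l)\<^sup>2)" and ?w2 = "(y2, t0 + (2 * M * l)\<^sup>2)"
  have w: "?w1 \<in> pball (y0, t0) R" "?w2 \<in> pball (y0, t0) R"
    using assms(1,2) by (auto intro!: mem_pball_rectangle)
  \<comment> \<open>the two points are far apart in time, while F does not separate their first coordinates\<close>
  have "2 * M * l \<le> dpar ?w1 ?w2"
    using M_pos l_pos by (simp add: real_le_rsqrt le_max_iff_disj)
  then have "2 * l \<le> dpar ?w1 ?w2 / M"
    using M_pos by (simp add: field_simps)
  moreover have "dpar (F ?w1) (F ?w2) = sqrt \<bar>?T1 - ?T2\<bar>"
    using assms(3) by (simp add: dpar_eq_fst_snd)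
  ultimately have "7 / 4 * l \<le> sqrt \<bar>?T1 - ?T2\<bar>"
    using dpar_lower[OF w] D_small by linarith
  then have "(7 / 4 * l)\<^sup>2 \<le> (sqrt \<bar>?T1 - ?T2\<bar>)\<^sup>2"
    using l_pos by (intro power_mono) auto
  then show ?thesis
    by (simp add: power2_eq_square)
qed

lemma snd_edges_separated:
  assumes crossing: "\<And>t. \<bar>t - t0\<bar> \<le> (2 * M * l)\<^sup>2 \<Longrightarrow> fst (F (y0 - R, t)) \<le> a \<and> a \<le> fst (F (y0 + R, t))"
  obtains c where
    "(\<forall>y\<in>{y0 - R..y0 + R}. snd (F (y, t0 - (2 * M * l)\<^sup>2)) \<le> c \<and> c + 2 * l\<^sup>2 \<le> snd (F (y, t0 + (2 * M * l)\<^sup>2)))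
   \<or> (\<forall>y\<in>{y0 - R..y0 + R}. snd (F (y, t0 + (2 * M * l)\<^sup>2)) \<le> c \<and> c + 2 * l\<^sup>2 \<le> snd (F (y, t0 - (2 * M * l)\<^sup>2)))"
proof -
  define \<rho> where "\<rho> = 2 * M * l"
  obtain y1 where y1: "\<bar>y1 - y0\<bar> \<le> R" "fst (F (y1, t0 - \<rho>\<^sup>2)) = a"
    using crossing[of "t0 - \<rho>\<^sup>2"] by (auto simp: \<rho>_def intro: fst_level_crossing[of "t0 - \<rho>\<^sup>2" a])
  obtain y2 where y2: "\<bar>y2 - y0\<bar> \<le> R" "fst (F (y2, t0 + \<rho>\<^sup>2)) = a"
    using crossing[of "t0 + \<rho>\<^sup>2"] by (auto simp: \<rho>_def intro: fst_level_crossing[of "t0 + \<rho>\<^sup>2" a])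
  have gap: "49 / 16 * l\<^sup>2 \<le> \<bar>snd (F (y1, t0 - \<rho>\<^sup>2)) - snd (F (y2, t0 + \<rho>\<^sup>2))\<bar>"
    using snd_gap_at_crossings[OF y1(1) y2(1)] y1(2) y2(2) by (simp add: \<rho>_def)
  have "\<bar>snd (F (y, t0 - \<rho>\<^sup>2)) - snd (F (y1, t0 - \<rho>\<^sup>2))\<bar> < l\<^sup>2 / 16"
    "\<bar>snd (F (y, t0 + \<rho>\<^sup>2)) - snd (F (y2, t0 + \<rho>\<^sup>2))\<bar> < l\<^sup>2 / 16"
    if "y \<in> {y0 - R..y0 + R}" for y
    using that y1(1) y2(1) unfolding \<rho>_def by (intro snd_close_on_level; simp add: abs_le_iff)+
  then have near: "\<forall>y\<in>{y0 - R..y0 + R}. \<bar>snd (F (y, t0 - \<rho>\<^sup>2)) - snd (F (y1, t0 - \<rho>\<^sup>2))\<bar> < l\<^sup>2 / 16"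
    "\<forall>y\<in>{y0 - R..y0 + R}. \<bar>snd (F (y, t0 + \<rho>\<^sup>2)) - snd (F (y2, t0 + \<rho>\<^sup>2))\<bar> < l\<^sup>2 / 16"
    by blast+
  obtain c where "(\<forall>y\<in>{y0 - R..y0 + R}. snd (F (y, t0 - \<rho>\<^sup>2)) \<le> c \<and> c + 2 * l\<^sup>2 \<le> snd (F (y, t0 + \<rho>\<^sup>2)))
   \<or> (\<forall>y\<in>{y0 - R..y0 + R}. snd (F (y, t0 + \<rho>\<^sup>2)) \<le> c \<and> c + 2 * l\<^sup>2 \<le> snd (F (y, t0 - \<rho>\<^sup>2)))"
    by (rule separating_level[OF gap near])
  then show ?thesis
    using that unfolding \<rho>_def by blast
qed

lemma pball_subset_image_oriented:
  assumes "fst (F (y0 - R, t0)) \<le> fst (F (y0 + R, t0))"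
  shows "\<exists>z. pball z l \<subseteq> F ` pball (y0, t0) R"
proof -
  define \<rho> where "\<rho> = 2 * M * l"
  obtain a where a: "\<And>t. \<bar>t - t0\<bar> \<le> \<rho>\<^sup>2 \<Longrightarrow> fst (F (y0 - R, t)) \<le> a \<and> a + 2 * l \<le> fst (F (y0 + R, t))"
    using fst_edges_separated[OF assms] unfolding \<rho>_def by blast
  have "fst (F (y0 - R, t)) \<le> a \<and> a \<le> fst (F (y0 + R, t))" if "\<bar>t - t0\<bar> \<le> \<rho>\<^sup>2" for t
    using a[OF that] l_pos by linarith
  then obtain c where c:
    "(\<forall>y\<in>{y0 - R..y0 + R}. snd (F (y, t0 - \<rho>\<^sup>2)) \<le> c \<and> c + 2 * l\<^sup>2 \<le> snd (F (y, t0 + \<rho>\<^sup>2)))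
   \<or> (\<forall>y\<in>{y0 - R..y0 + R}. snd (F (y, t0 + \<rho>\<^sup>2)) \<le> c \<and> c + 2 * l\<^sup>2 \<le> snd (F (y, t0 - \<rho>\<^sup>2)))"
    using snd_edges_separated unfolding \<rho>_def by blast
  have rectangle: "cbox (y0 - R, t0 - \<rho>\<^sup>2) (y0 + R, t0 + \<rho>\<^sup>2) \<subseteq> pball (y0, t0) R"
    by (auto simp: cbox_Pair_iff \<rho>_def abs_le_iff intro!: mem_pball_rectangle)
  have "cbox (a, c) (a + 2 * l, c + 2 * l\<^sup>2) \<subseteq> F ` cbox (y0 - R, t0 - \<rho>\<^sup>2) (y0 + R, t0 + \<rho>\<^sup>2)"
  proof (rule cbox_subset_image_rectangle)
    show "y0 - R \<le> y0 + R"
      using R_pos by simp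
    show "continuous_on (cbox (y0 - R, t0 - \<rho>\<^sup>2) (y0 + R, t0 + \<rho>\<^sup>2)) F"
      using continuous rectangle by (rule continuous_on_subset)
    show "fst (F (y0 - R, t)) \<le> a \<and> a + 2 * l \<le> fst (F (y0 + R, t))" if "t0 - \<rho>\<^sup>2 \<le> t" "t \<le> t0 + \<rho>\<^sup>2" for t
      using a that by (simp add: abs_le_iff)
  qed (use c in simp_all)
  moreover have "pball (a + l, c + l\<^sup>2) l = cbox (a, c) (a + 2 * l, c + 2 * l\<^sup>2)"
    using l_pos by (simp add: pball_eq_cbox add.commute)
  ultimately have "pball (a + l, c + l\<^sup>2) l \<subseteq> F ` pball (y0, t0) R"
    using rectangle by blast
  then show ?thesis ..
qed

lemma pball_subset_image: "\<exists>z. pball z l \<subseteq> F ` pball (y0, t0) R"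
proof (cases "fst (F (y0 - R, t0)) \<le> fst (F (y0 + R, t0))")
  case True
  then show ?thesis
    by (rule pball_subset_image_oriented)
next
  case False
  \<comment> \<open>reflecting the first coordinate of the target reverses the orientation\<close>
  define G where "G w = (- fst (F w), snd (F w))" for w
  interpret reflected: coarse_parabolic_map G M l D y0 t0 R
  proof
    show "continuous_on (pball (y0, t0) R) G"
      unfolding G_def using continuous by (intro continuous_intros)
    show "dpar w v / M - 2 * D \<le> dpar (G w) (G v)" if "w \<in> pball (y0, t0) R" "v \<in> pball (y0, t0) R" for w v
      unfolding G_def dpar_uminus_fst using dpar_lower[OF that] .
    show "\<bar>fst (G w) - fst (G v)\<bar> \<le> M * dpar w v + 2 * D" if "w \<in> pball (y0, t0) R" "v \<in> pball (y0, t0) R" for w v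
      unfolding G_def using fst_upper[OF that] by (simp add: abs_minus_commute)
  qed (use M_ge_1 l_pos D_nonneg D_small R_large snd_almost_constant in \<open>simp_all add: G_def\<close>)
  obtain z where z: "pball z l \<subseteq> G ` pball (y0, t0) R"
    using reflected.pball_subset_image_oriented False by (force simp: G_def)
  have "pball (- fst z, snd z) l \<subseteq> F ` pball (y0, t0) R"
  proof
    fix v assume "v \<in> pball (- fst z, snd z) l"
    moreover have "dpar z (- fst v, snd v) = dpar (- fst z, snd z) v"
      using dpar_uminus_fst[of "(- fst z, snd z)" v] by simp
    ultimately have "(- fst v, snd v) \<in> pball z l"
      by (simp add: pball_def)
    then obtain w where "w \<in> pball (y0, t0) R" "(- fst v, snd v) = G w"
      using z by blast
    then show "v \<in> F ` pball (y0, t0) R"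
      by (force simp: G_def prod_eq_iff)
  qed
  then show ?thesis ..
qed

end

section \<open>Projections of bi-Lipschitz images\<close>

lemma tendsto_hdist_imp_tendsto:
  assumes "((\<lambda>x. hdist (g x) p) \<longlongrightarrow> 0) F"
  shows "(g \<longlongrightarrow> p) F"
proof -
  obtain px py pt where p: "p = (px, py, pt)"
    by (cases p)
  define X Y T where "X x = fst (g x)" and "Y x = fst (snd (g x))" and "T x = snd (snd (g x))" for x
  define cross where "cross x = (X x * py - px * Y x) / 2" for x
  have g: "g x = (X x, Y x, T x)" for x
    by (simp add: X_def Y_def T_def)
  have h: "hdist (g x) p = max (sqrt ((X x - px)\<^sup>2 + (Y x - py)\<^sup>2)) (sqrt \<bar>T x - pt + cross x\<bar>)" for x
    by (simp add: g p hdist_eq cross_def)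
  have "\<bar>X x - px\<bar> \<le> hdist (g x) p" "\<bar>Y x - py\<bar> \<le> hdist (g x) p" for x
    unfolding h by (simp_all add: le_max_iff_disj)
  then have "((\<lambda>x. X x - px) \<longlongrightarrow> 0) F" "((\<lambda>x. Y x - py) \<longlongrightarrow> 0) F"
    by (auto intro!: Lim_null_comparison[OF _ assms])
  then have X: "(X \<longlongrightarrow> px) F" and Y: "(Y \<longlongrightarrow> py) F"
    by (simp_all add: LIM_zero_cancel)
  have "\<bar>T x - pt + cross x\<bar> \<le> (hdist (g x) p)\<^sup>2" for x
    unfolding h by (intro sqrt_le_D) simp
  then have "\<forall>\<^sub>F x in F. norm (T x - pt + cross x) \<le> (hdist (g x) p)\<^sup>2"
    by (intro always_eventually allI) simp
  moreover have "((\<lambda>x. (hdist (g x) p)\<^sup>2) \<longlongrightarrow> 0) F"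
    using tendsto_power[OF assms, of 2] by simp
  ultimately have "((\<lambda>x. T x - pt + cross x) \<longlongrightarrow> 0) F"
    by (rule Lim_null_comparison)
  moreover have "(cross \<longlongrightarrow> (px * py - px * py) / 2) F"
    unfolding cross_def[abs_def] by (intro tendsto_intros X Y) simp
  ultimately have "((\<lambda>x. (T x - pt + cross x) - cross x) \<longlongrightarrow> 0 - 0) F"
    by (intro tendsto_diff) simp_all
  then have T: "(T \<longlongrightarrow> pt) F"
    by (simp add: LIM_zero_cancel)
  have "((\<lambda>x. (X x, Y x, T x)) \<longlongrightarrow> (px, py, pt)) F"
    using X Y T by (intro tendsto_Pair)
  moreover have "(\<lambda>x. (X x, Y x, T x)) = g"
    by (intro ext) (simp add: g)
  ultimately show ?thesis
    by (simp add: p)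
qed

lemma continuous_on_hdist_lipschitz:
  assumes lip: "\<And>w v. hdist (f w) (f v) \<le> M * dpar w v"
  shows "continuous_on A f"
proof -
  have "isCont f w" for w
  proof -
    have "((\<lambda>v. max \<bar>fst v - fst w\<bar> (sqrt \<bar>snd v - snd w\<bar>))
        \<longlongrightarrow> max \<bar>fst w - fst w\<bar> (sqrt \<bar>snd w - snd w\<bar>)) (at w)"
      by (intro tendsto_max tendsto_rabs tendsto_diff tendsto_real_sqrt tendsto_fst tendsto_snd
          tendsto_ident_at tendsto_const)
    then have "((\<lambda>v. dpar v w) \<longlongrightarrow> 0) (at w)"
      by (simp add: dpar_eq_fst_snd)
    then have "((\<lambda>v. M * dpar v w) \<longlongrightarrow> 0) (at w)"
      by (rule tendsto_mult_right_zero)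
    moreover have "\<forall>\<^sub>F v in at w. norm (hdist (f v) (f w)) \<le> M * dpar v w"
      by (intro always_eventually allI) (simp add: hdist_nonneg lip)
    ultimately have "((\<lambda>v. hdist (f v) (f w)) \<longlongrightarrow> 0) (at w)"
      by (rule Lim_null_comparison[rotated])
    then show ?thesis
      unfolding isCont_def by (rule tendsto_hdist_imp_tendsto)
  qed
  then show ?thesis
    by (simp add: continuous_at_imp_continuous_on)
qed

lemma hsetdist_le:
  assumes "q \<in> L"
  shows "hsetdist p L \<le> hdist p q"
  unfolding hsetdist_def
proof (rule cInf_lower)
  show "hdist p q \<in> {hdist p q | q. q \<in> L}"
    using assms by blast
  show "bdd_below {hdist p q | q. q \<in> L}"
    by (rule bdd_belowI[where m = 0]) (auto simp: hdist_nonneg)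
qed

lemma hsetdist_lessD: "L \<noteq> {} \<Longrightarrow> hsetdist p L < D \<Longrightarrow> \<exists>q\<in>L. hdist p q < D"
  unfolding hsetdist_def using cInf_lessD[of "{hdist p q | q. q \<in> L}" D] by auto

lemma close_to_yt_point:
  assumes "hdist p (0, s, c) < D"
  shows "\<bar>fst p\<bar> \<le> D \<and> \<bar>snd (snd (proj p)) - c\<bar> \<le> 2 * D\<^sup>2"
proof -
  obtain x y t where p: "p = (x, y, t)"
    by (cases p)
  have h1: "sqrt (x\<^sup>2 + (y - s)\<^sup>2) < D" and h2: "sqrt \<bar>t - c + x * s / 2\<bar> < D"
    using assms by (simp_all add: p hdist_eq)
  then have "x\<^sup>2 + (y - s)\<^sup>2 \<le> D\<^sup>2" "\<bar>t - c + x * s / 2\<bar> \<le> D\<^sup>2"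
    by (auto intro: sqrt_le_D less_imp_le)
  moreover have "2 * \<bar>x * (y - s)\<bar> \<le> x\<^sup>2 + (y - s)\<^sup>2"
    using sum_squares_bound[of "\<bar>x\<bar>" "\<bar>y - s\<bar>"] by (simp add: abs_mult)
  moreover have split: "t + x * y / 2 - c = (t - c + x * s / 2) + x * (y - s) / 2"
    by (simp add: field_simps)
  have "\<bar>t + x * y / 2 - c\<bar> \<le> \<bar>t - c + x * s / 2\<bar> + \<bar>x * (y - s) / 2\<bar>"
    unfolding split by (rule abs_triangle_ineq)
  moreover have "\<bar>x * (y - s) / 2\<bar> = \<bar>x * (y - s)\<bar> / 2"
    by simp
  ultimately have "\<bar>t + x * y / 2 - c\<bar> \<le> 2 * D\<^sup>2"
    using zero_le_power2[of D] by linarith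
  moreover have "\<bar>x\<bar> \<le> D"
    using h1 real_sqrt_ge_abs1[of x "y - s"] by linarith
  ultimately show ?thesis
    by (simp add: p)
qed

lemma close_to_flat_line:
  assumes flat: "\<forall>q\<in>L. fst (rot (-\<theta>) q) = 0 \<and> snd (snd q) = c" and "L \<noteq> {}" "hsetdist p L < D"
  shows "\<bar>fst (rot (-\<theta>) p)\<bar> \<le> D \<and> \<bar>snd (snd (proj (rot (-\<theta>) p))) - c\<bar> \<le> 2 * D\<^sup>2"
proof -
  obtain q where q: "q \<in> L" "hdist p q < D"
    using hsetdist_lessD[OF assms(2,3)] by blast
  obtain s where "rot (-\<theta>) q = (0, s, c)"
    using flat q(1) by (cases "rot (-\<theta>) q") (metis fst_conv snd_conv snd_snd_rot)
  then have "hdist (rot (-\<theta>) p) (0, s, c) < D"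
    using q(2) hdist_rot[of "-\<theta>" p q] by simp
  then show ?thesis
    by (rule close_to_yt_point)
qed

lemma beta_lessE:
  assumes lip: "\<And>w v. hdist (f w) (f v) \<le> M * dpar w v" and "0 \<le> M"
    and V: "vertical_subgroup V" and "0 < r" and "beta f V w r < \<delta>"
  obtains e where "0 < e" "e < \<delta>"
    "\<And>hl. horizontal_line_W hl \<Longrightarrow> \<exists>L. horizontal_line L \<and> L \<subseteq> V \<and> f ` (hl \<inter> pball w r) \<subseteq> hnbhd L (e * r)"
proof -
  define E where "E = {\<epsilon>. \<epsilon> > 0 \<and> (\<forall>hl. horizontal_line_W hl \<longrightarrow>
    (\<exists>L. horizontal_line L \<and> L \<subseteq> V \<and> f ` (hl \<inter> pball w r) \<subseteq> hnbhd L (\<epsilon> * r)))}"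
  obtain L0 where L0: "horizontal_line L0" "L0 \<subseteq> V" "(0, 0, 0) \<in> L0"
    using vertical_subgroup_has_line[OF V] by blast
  \<comment> \<open>the set whose infimum is beta is nonempty: a line of V through the origin works for a large constant\<close>
  define e0 where "e0 = (M * r + hdist (f w) (0, 0, 0) + 1) / r"
  have "f ` (hl \<inter> pball w r) \<subseteq> hnbhd L0 (e0 * r)" for hl
  proof
    fix p assume "p \<in> f ` (hl \<inter> pball w r)"
    then obtain v where v: "v \<in> pball w r" "p = f v"
      by blast
    have "M * dpar v w \<le> M * r"
      using v(1) \<open>0 \<le> M\<close> by (simp add: pball_def dpar_commute mult_left_mono)
    then have "hdist p (f w) \<le> M * r"
      using lip[of v w] v(2) by simp
    moreover have "hsetdist p L0 \<le> hdist p (f w) + hdist (f w) (0, 0, 0)"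
      using hsetdist_le[OF L0(3), of p] hdist_triangle[of p "(0, 0, 0)" "f w"] by simp
    ultimately have "hsetdist p L0 \<le> e0 * r"
      using \<open>0 < r\<close> by (simp add: e0_def)
    then show "p \<in> hnbhd L0 (e0 * r)"
      by (simp add: hnbhd_def)
  qed
  moreover have "0 < e0"
    using \<open>0 < r\<close> \<open>0 \<le> M\<close> hdist_nonneg[of "f w" "(0, 0, 0)"] by (simp add: e0_def add_nonneg_pos)
  ultimately have "e0 \<in> E"
    unfolding E_def using L0(1,2) by blast
  then have "E \<noteq> {}"
    by blast
  moreover have "Inf E < \<delta>"
    using assms(5) by (simp add: beta_def E_def)
  ultimately obtain e where "e \<in> E" "e < \<delta>"
    using cInf_lessD by blast
  then show ?thesis
    using that unfolding E_def by blast
qed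

lemma hdist_proj_eq_dpar: "hdist (proj p) (proj q) = dpar (snd (proj p)) (snd (proj q))"
  by (metis hdist_yt_plane proj_eq_yt)

lemma coarse_parabolic_map_proj:
  fixes f :: "real \<times> real \<Rightarrow> heis"
  assumes bilip: "bilipschitz M f" and "1 \<le> M" "0 < l" "0 \<le> D" "D < l / 8" "4 * M ^ 3 * l \<le> R"
    and near_plane: "\<And>w. w \<in> pball (y0, t0) R \<Longrightarrow> \<bar>fst (rot (-\<theta>) (f w))\<bar> \<le> D"
    and snd_almost_constant: "\<And>y y' t. (y, t) \<in> pball (y0, t0) R \<Longrightarrow> (y', t) \<in> pball (y0, t0) R
      \<Longrightarrow> \<bar>snd (snd (proj (rot (-\<theta>) (f (y, t))))) - snd (snd (proj (rot (-\<theta>) (f (y', t)))))\<bar> \<le> 4 * D\<^sup>2"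
  shows "coarse_parabolic_map (\<lambda>w. snd (proj (rot (-\<theta>) (f w)))) M l D y0 t0 R"
proof
  define g where "g w = rot (-\<theta>) (f w)" for w
  have lip: "hdist (f w) (f v) \<le> M * dpar w v" and colip: "dpar w v / M \<le> hdist (f w) (f v)" for w v
    using bilip unfolding bilipschitz_def by blast+
  show "continuous_on (pball (y0, t0) R) (\<lambda>w. snd (proj (rot (-\<theta>) (f w))))"
    using continuous_on_hdist_lipschitz[OF lip]
    by (intro continuous_on_snd continuous_on_compose2[OF continuous_on_proj]
        continuous_on_compose2[OF continuous_on_rot]) auto
  fix w v assume w: "w \<in> pball (y0, t0) R" and v: "v \<in> pball (y0, t0) R"
  have "hdist (g w) (g v) = hdist (f w) (f v)"
    by (simp add: g_def hdist_rot)
  then have "dpar w v / M \<le> hdist (proj (g w)) (proj (g v)) + 2 * D"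
    using colip[of w v] hdist_le_hdist_proj[of "g w" "g v"] near_plane[OF w] near_plane[OF v]
    unfolding g_def by linarith
  then show "dpar w v / M - 2 * D \<le> dpar (snd (proj (rot (-\<theta>) (f w)))) (snd (proj (rot (-\<theta>) (f v))))"
    by (simp add: hdist_proj_eq_dpar g_def)
  have "\<bar>fst (snd (proj (g w))) - fst (snd (proj (g v)))\<bar> \<le> hdist (proj (g w)) (proj (g v))"
    by (simp add: hdist_proj_eq_dpar dpar_eq_fst_snd)
  also have "\<dots> \<le> hdist (g w) (g v) + 2 * D"
    using hdist_proj_le_hdist[of "g w" "g v"] near_plane[OF w] near_plane[OF v] unfolding g_def by linarith
  also have "\<dots> \<le> M * dpar w v + 2 * D"
    using lip[of w v] by (simp add: g_def hdist_rot)
  finally show "\<bar>fst (snd (proj (rot (-\<theta>) (f w)))) - fst (snd (proj (rot (-\<theta>) (f v))))\<bar> \<le> M * dpar w v + 2 * D"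
    by (simp add: g_def)
qed (use assms in auto)

lemma hausdorff_proj_theta_image_ge:
  fixes f :: "real \<times> real \<Rightarrow> heis"
  assumes "0 \<le> r" and covered: "pball z r \<subseteq> (\<lambda>w. snd (proj (rot (-\<theta>) (f w)))) ` B"
  shows "ennreal (r ^ 3) \<le> hausdorff_measure hdist 3 (proj_theta \<theta> ` f ` B)"
proof -
  define S where "S = proj_theta \<theta> ` f ` B"
  define \<pi> where "\<pi> p = snd (rot (-\<theta>) p)" for p
  have \<pi>_proj_theta: "\<pi> (proj_theta \<theta> q) = snd (proj (rot (-\<theta>) q))" for q
    by (simp add: \<pi>_def proj_theta_def)
  have in_plane: "rot (-\<theta>) p = (0, \<pi> p)" if p: "p \<in> S" for p
  proof -
    obtain v where "p = proj_theta \<theta> (f v)"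
      using p unfolding S_def by blast
    then show ?thesis
      using proj_eq_yt[of "rot (-\<theta>) (f v)"] by (simp add: \<pi>_def proj_theta_def)
  qed
  have "dpar (\<pi> p) (\<pi> q) \<le> hdist p q" if "p \<in> S" "q \<in> S" for p q
    using hdist_rot[of "-\<theta>" p q] in_plane[OF that(1)] in_plane[OF that(2)] by (simp add: hdist_yt_plane)
  moreover have "\<pi> ` S = (\<lambda>w. snd (proj (rot (-\<theta>) (f w)))) ` B"
    by (simp add: S_def image_image \<pi>_proj_theta)
  moreover obtain y t where "z = (y, t)"
    by fastforce
  then have "pball z r \<in> sets lborel"
    using \<open>0 \<le> r\<close> by (simp add: pball_eq_cbox)
  ultimately have "emeasure lborel (pball z r) / 4 \<le> hausdorff_measure hdist 3 S"
    using covered by (intro hausdorff_measure_ge_lborel) auto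
  then show ?thesis
    using \<open>0 \<le> r\<close> by (simp add: S_def emeasure_pball ennreal_divide_numeral)
qed

lemma horizontal_line_nonempty: "horizontal_line L \<Longrightarrow> L \<noteq> {}"
  unfolding horizontal_line_def by blast

lemma close_to_flat_line_family:
  assumes L: "\<And>t. horizontal_line (L t)" "\<And>t. f ` ((UNIV \<times> {t}) \<inter> B) \<subseteq> hnbhd (L t) \<delta>"
    and flat: "\<And>t. \<forall>q\<in>L t. fst (rot (-\<theta>) q) = 0 \<and> snd (snd q) = c t"
    and "\<delta> < D" "v \<in> B"
  shows "\<bar>fst (rot (-\<theta>) (f v))\<bar> \<le> D \<and> \<bar>snd (snd (proj (rot (-\<theta>) (f v)))) - c (snd v)\<bar> \<le> 2 * D\<^sup>2"
proof -
  have "v \<in> (UNIV \<times> {snd v}) \<inter> B"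
    using \<open>v \<in> B\<close> by (cases v) simp
  then have "f v \<in> f ` ((UNIV \<times> {snd v}) \<inter> B)"
    by (rule imageI)
  then have "f v \<in> hnbhd (L (snd v)) \<delta>"
    using L(2)[of "snd v"] by (rule subsetD[rotated])
  then have "hsetdist (f v) (L (snd v)) < D"
    using \<open>\<delta> < D\<close> by (simp add: hnbhd_def)
  then show ?thesis
    using close_to_flat_line[OF flat horizontal_line_nonempty[OF L(1)]] by blast
qed

lemma beta_less_obtains_flat_lines:
  fixes f :: "real \<times> real \<Rightarrow> heis"
  assumes bilip: "bilipschitz M f" and "1 \<le> M" and V: "vertical_subgroup V" "plane_angle V \<theta> = 0"
    and "0 < R" and beta: "beta f V w R < \<delta>"
  obtains D c where "0 \<le> D" "D < \<delta> * R" "\<And>v. v \<in> pball w R \<Longrightarrow>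
    \<bar>fst (rot (-\<theta>) (f v))\<bar> \<le> D \<and> \<bar>snd (snd (proj (rot (-\<theta>) (f v)))) - c (snd v)\<bar> \<le> 2 * D\<^sup>2"
proof -
  have lip: "hdist (f v) (f u) \<le> M * dpar v u" for v u
    using bilip unfolding bilipschitz_def by blast
  obtain e where "0 < e" "e < \<delta>" and lines: "\<And>hl. horizontal_line_W hl
      \<Longrightarrow> \<exists>L. horizontal_line L \<and> L \<subseteq> V \<and> f ` (hl \<inter> pball w R) \<subseteq> hnbhd L (e * R)"
    using beta_lessE[OF lip _ V(1) \<open>0 < R\<close> beta] \<open>1 \<le> M\<close> by auto
  have "\<exists>L c. horizontal_line L \<and> f ` ((UNIV \<times> {t}) \<inter> pball w R) \<subseteq> hnbhd L (e * R)
      \<and> (\<forall>q\<in>L. fst (rot (-\<theta>) q) = 0 \<and> snd (snd q) = c)" for t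
  proof -
    obtain L where "horizontal_line L" "L \<subseteq> V" "f ` ((UNIV \<times> {t}) \<inter> pball w R) \<subseteq> hnbhd L (e * R)"
      using lines[of "UNIV \<times> {t}"] by (auto simp: horizontal_line_W_def)
    then show ?thesis
      using angle_zero_horizontal_line[OF V] by blast
  qed
  then obtain L c where L: "\<And>t. horizontal_line (L t)"
    "\<And>t. f ` ((UNIV \<times> {t}) \<inter> pball w R) \<subseteq> hnbhd (L t) (e * R)"
    and flat: "\<And>t. \<forall>q\<in>L t. fst (rot (-\<theta>) q) = 0 \<and> snd (snd q) = c t"
    by metis
  define D where "D = (e * R + \<delta> * R) / 2"
  have "e * R < \<delta> * R" "0 < e * R"
    using \<open>e < \<delta>\<close> \<open>0 < e\<close> \<open>0 < R\<close> by (simp_all add: mult_strict_right_mono)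
  then have D: "e * R < D" "D < \<delta> * R" "0 \<le> D"
    unfolding D_def by (simp_all add: field_simps)
  have near: "\<bar>fst (rot (-\<theta>) (f v))\<bar> \<le> D \<and> \<bar>snd (snd (proj (rot (-\<theta>) (f v)))) - c (snd v)\<bar> \<le> 2 * D\<^sup>2"
    if "v \<in> pball w R" for v
    using close_to_flat_line_family[OF L flat D(1) that] .
  show ?thesis
    using that[OF D(3) D(2) near] .
qed

lemma proj_theta_image_measure_ge:
  fixes f :: "real \<times> real \<Rightarrow> heis"
  assumes bilip: "bilipschitz M f" and "1 \<le> M" "4 * M ^ 3 \<le> H" "0 < r"
    and V: "vertical_subgroup V" "plane_angle V \<theta> = 0"
    and beta: "beta f V w (H * r) < 1 / (8 * H)"
  shows "ennreal (r ^ 3) \<le> hausdorff_measure hdist 3 (proj_theta \<theta> ` f ` pball w (H * r))"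
proof -
  obtain y0 t0 where w: "w = (y0, t0)"
    by fastforce
  have "0 < H"
    using \<open>1 \<le> M\<close> \<open>4 * M ^ 3 \<le> H\<close> by (smt (verit) one_le_power)
  then obtain D c where D: "0 \<le> D" "D < 1 / (8 * H) * (H * r)" and near: "\<And>v. v \<in> pball w (H * r) \<Longrightarrow>
    \<bar>fst (rot (-\<theta>) (f v))\<bar> \<le> D \<and> \<bar>snd (snd (proj (rot (-\<theta>) (f v)))) - c (snd v)\<bar> \<le> 2 * D\<^sup>2"
    using beta_less_obtains_flat_lines[OF bilip \<open>1 \<le> M\<close> V _ beta] \<open>0 < r\<close> by auto
  interpret coarse_parabolic_map "\<lambda>v. snd (proj (rot (-\<theta>) (f v)))" M r D y0 t0 "H * r"
  proof (rule coarse_parabolic_map_proj[OF bilip \<open>1 \<le> M\<close> \<open>0 < r\<close> D(1)])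
    show "D < r / 8"
      using D(2) \<open>0 < H\<close> by simp
    show "4 * M ^ 3 * r \<le> H * r"
      using \<open>4 * M ^ 3 \<le> H\<close> \<open>0 < r\<close> by simp
    show "\<bar>fst (rot (-\<theta>) (f v))\<bar> \<le> D" if "v \<in> pball (y0, t0) (H * r)" for v
      using near that by (simp add: w)
    show "\<bar>snd (snd (proj (rot (-\<theta>) (f (y, t))))) - snd (snd (proj (rot (-\<theta>) (f (y', t)))))\<bar> \<le> 4 * D\<^sup>2"
      if "(y, t) \<in> pball (y0, t0) (H * r)" "(y', t) \<in> pball (y0, t0) (H * r)" for y y' t
      using near[of "(y, t)"] near[of "(y', t)"] that unfolding w abs_le_iff by auto
  qed
  obtain z where "pball z r \<subseteq> (\<lambda>v. snd (proj (rot (-\<theta>) (f v)))) ` pball (y0, t0) (H * r)"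
    using pball_subset_image by blast
  then show ?thesis
    using hausdorff_proj_theta_image_ge \<open>0 < r\<close> by (simp add: w)
qed

theorem proposition5p3:
  fixes M :: real
  assumes "M \<ge> 1"
  shows "\<exists>H :: real. H \<ge> 1 \<and> (\<exists>\<epsilon> :: real. \<epsilon> > 0 \<and>
    (\<forall>(f :: real \<times> real \<Rightarrow> heis) (\<theta> :: real) (n :: int) (k :: int) (l :: int).
       bilipschitz M f \<longrightarrow> -(pi/2) \<le> \<theta> \<longrightarrow> \<theta> < pi/2 \<longrightarrow>
       (\<exists>V. vertical_subgroup V \<and> plane_angle V \<theta> = 0 \<and>
            beta f V (centre n k l) (H * side n) < \<epsilon> / H) \<longrightarrow>
       hausdorff_measure hdist 3 (proj_theta \<theta> ` f ` enlarged H n k l) \<ge> ennreal (side n ^ 3)))"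
proof -
  define H where "H = 4 * M ^ 3"
  have "1 \<le> H"
    using one_le_power[OF assms, of 3] by (simp add: H_def)
  have "ennreal (side n ^ 3) \<le> hausdorff_measure hdist 3 (proj_theta \<theta> ` f ` enlarged H n k l)"
    if "bilipschitz M f" "vertical_subgroup V" "plane_angle V \<theta> = 0"
      "beta f V (centre n k l) (H * side n) < 1 / 8 / H"
    for f \<theta> n k l V
    using proj_theta_image_measure_ge[OF that(1) assms _ _ that(2,3)] that(4)
    by (simp add: H_def enlarged_def side_def)
  with \<open>1 \<le> H\<close> show ?thesis
    by (intro exI[of _ H] conjI exI[of _ "1 / 8"]) auto
qed

end
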